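(* Let $P_1,\ldots,P_n$ be closed disks with centers $c_i$ and radii $\rho_i\ge0$, let $D_{ij}$ be the closed disk with center $c_i-c_j$ and radius $\rho_i+\rho_j$, $\mathcal{D}=\bigcup_{i,j}D_{ij}$, and let $A_{ij}$ be the Apollonius cell of $D_{ij}$ in the Apollonius diagram of $\{D_{ij}\}_{i,j=1}^n$. If an Apollonius edge $pq$ of $A_{ij}$ (with endpoints $p,q$) meets the circle $\partial D_{ij}$ at a point $x\ne p,q$, then there are points $x'$ on the edge $pq$ arbitrarily close to $x$ that are not contained in $\mathcal{D}$.
   Context: For a family of disks $D_k$ with centers $c_k$ and radii $\rho_k$, $\delta_k(x)=\|x-c_k\|-\rho_k$; the Apollonius cell of $D_k$ is $\{x\mid\delta_k(x)\le\delta_l(x)\text{ for all }l\}$; the one-dimensional connected sets of points belonging to exactly two cells are Apollonius edges. *)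

theory Defs
  imports "HOL-Analysis.Analysis"
begin

text \<open>A disk is represented by a pair (center, radius).\<close>

definition delta :: "((real^2) \<times> real) \<Rightarrow> real^2 \<Rightarrow> real" where
  "delta D x = norm (x - fst D) - snd D"

definition apollonius_cell :: "((real^2) \<times> real) set \<Rightarrow> ((real^2) \<times> real) \<Rightarrow> (real^2) set" where
  "apollonius_cell S D = {x. \<forall>D'\<in>S. delta D x \<le> delta D' x}"

definition two_cell_points :: "((real^2) \<times> real) set \<Rightarrow> (real^2) set" where
  "two_cell_points S = {x. card {D\<in>S. x \<in> apollonius_cell S D} = 2}"

definition apollonius_edge :: "((real^2) \<times> real) set \<Rightarrow> (real^2) set \<Rightarrow> bool" where
  "apollonius_edge S E \<longleftrightarrow> E \<in> components (two_cell_points S)"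

definition diff_disks :: "nat \<Rightarrow> (nat \<Rightarrow> real^2) \<Rightarrow> (nat \<Rightarrow> real) \<Rightarrow> ((real^2) \<times> real) set" where
  "diff_disks n c \<rho> = (\<lambda>(k,l). (c k - c l, \<rho> k + \<rho> l)) ` ({1..n} \<times> {1..n})"

definition diff_disks_union :: "nat \<Rightarrow> (nat \<Rightarrow> real^2) \<Rightarrow> (nat \<Rightarrow> real) \<Rightarrow> (real^2) set" where
  "diff_disks_union n c \<rho> = (\<Union>(k,l)\<in>{1..n} \<times> {1..n}. cball (c k - c l) (\<rho> k + \<rho> l))"

end

theory Submission
  imports Defs
begin

text \<open>Let \<open>A\<close> be the disk \<open>D\<^sub>i\<^sub>j\<close>. Near \<open>x\<close> only the cells of \<open>A\<close> and of one other
  site \<open>B\<close> can be active, so the edge runs along the bisector \<open>\<delta>\<^sub>A = \<delta>\<^sub>B\<close>. Every point of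
  \<open>\<D>\<close> in the cell of \<open>A\<close> lies in \<open>A\<close>, so if the claim failed, \<open>\<delta>\<^sub>A\<close>, which vanishes at \<open>x\<close>,
  would have a local maximum at the interior point \<open>x\<close> of the arc. But on the bisector inside
  \<open>A\<close> and near \<open>x\<close> the function \<open>\<delta>\<^sub>A\<close> is injective, and a continuous injective function on
  an interval is strictly monotone.\<close>

definition cross2 :: "real^2 \<Rightarrow> real^2 \<Rightarrow> real" where
  "cross2 u v = u$1 * v$2 - u$2 * v$1"

lemma cross2_diff_right: "cross2 w (u - v) = cross2 w u - cross2 w v"
  by (simp add: cross2_def algebra_simps)

lemma inner_square_plus_cross2_square:
  "(u \<bullet> w)^2 + (cross2 w u)^2 = (norm u)^2 * (norm w)^2"
  unfolding power2_norm_eq_inner cross2_def by (simp add: inner_vec_def sum_2) algebra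

lemma vec2_eq_if_inner_cross2_eq:
  assumes "w \<noteq> 0" "u \<bullet> w = v \<bullet> w" "cross2 w u = cross2 w v"
  shows "u = v"
proof -
  have "(norm (u - v))^2 * (norm w)^2 = 0"
    using inner_square_plus_cross2_square[of "u - v" w] assms(2,3)
    by (simp add: inner_diff_left cross2_diff_right)
  then show ?thesis using assms(1) by simp
qed

lemma power2_norm_diff_recenter:
  fixes y a b :: "'a::real_inner"
  shows "(norm (y - b))^2 = (norm (y - a))^2 - 2 * ((y - a) \<bullet> (b - a)) + (norm (b - a))^2"
  by (simp add: power2_norm_eq_inner inner_diff_left inner_diff_right inner_commute)

lemma inner_eq_if_equidistant:
  fixes a b y1 y2 :: "'a::real_inner"
  assumes "norm (y1 - a) = norm (y2 - a)" "norm (y1 - b) = norm (y2 - b)"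
  shows "(y1 - a) \<bullet> (b - a) = (y2 - a) \<bullet> (b - a)"
  using assms power2_norm_diff_recenter[of y1 b a] power2_norm_diff_recenter[of y2 b a] by simp

text \<open>Two points at the same distances from \<open>a \<noteq> b\<close> are equal or mirror images in the
  line \<open>ab\<close>; the sign of \<open>cross2 (b - a)\<close> tells the two sides of that line apart.\<close>
lemma eq_if_equidistant_same_side:
  fixes a b y1 y2 :: "real^2"
  assumes "a \<noteq> b" "norm (y1 - a) = norm (y2 - a)" "norm (y1 - b) = norm (y2 - b)"
    and same_side: "0 \<le> cross2 (b - a) (y1 - a) * cross2 (b - a) (y2 - a)"
  shows "y1 = y2"
proof -
  have inner_eq: "(y1 - a) \<bullet> (b - a) = (y2 - a) \<bullet> (b - a)"
    using assms(2,3) by (rule inner_eq_if_equidistant)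
  then have "(cross2 (b - a) (y1 - a))^2 = (cross2 (b - a) (y2 - a))^2"
    using inner_square_plus_cross2_square[of "y1 - a" "b - a"]
      inner_square_plus_cross2_square[of "y2 - a" "b - a"] assms(2) by simp
  with same_side have "cross2 (b - a) (y1 - a) = cross2 (b - a) (y2 - a)"
    by (smt (verit) power2_eq_iff mult_minus_left zero_le_square power2_eq_square)
  with inner_eq have "y1 - a = y2 - a"
    using assms(1) by (intro vec2_eq_if_inner_cross2_eq[of "b - a"]) simp_all
  then show ?thesis by simp
qed

text \<open>If \<open>x\<close> lies on the line \<open>ab\<close>, the branch of the bisector of the circles through \<open>x\<close>
  around \<open>a\<close> and \<open>b\<close> is a ray of that line or a hyperbola branch with vertex \<open>x\<close>; inside the
  disk around \<open>a\<close> only points of the line remain.\<close>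
lemma cross2_eq_0_on_bisector_inside_disk:
  fixes a b x y :: "real^2"
  assumes x_on_line: "cross2 (b - a) (x - a) = 0" and "norm (x - a) = r" "norm (x - b) = s"
    and on_bisector: "norm (y - a) - r = norm (y - b) - s" and inside: "norm (y - a) \<le> r"
  shows "cross2 (b - a) (y - a) = 0"
proof -
  define d where "d = norm (b - a)"
  define t where "t = norm (y - a)"
  define q where "q = (x - a) \<bullet> (b - a)"
  define p where "p = (y - a) \<bullet> (b - a)"
  have "r \<ge> 0" "s \<ge> 0" "d \<ge> 0" using assms(2,3) by (auto simp: d_def)
  have "q^2 = (r * d)^2"
    using inner_square_plus_cross2_square[of "x - a" "b - a"] x_on_line assms(2)
    by (simp add: q_def d_def power_mult_distrib)
  moreover have s_sq: "s^2 = r^2 - 2 * q + d^2"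
    using power2_norm_diff_recenter[of x b a] assms(2,3) by (simp add: q_def d_def)
  ultimately have "s^2 = (r - d)^2 \<or> s^2 = (r + d)^2"
    by (auto simp: power2_eq_iff power2_diff power2_sum)
  then have s_cases: "s = r - d \<or> s = d - r \<or> s = r + d"
    using \<open>r \<ge> 0\<close> \<open>s \<ge> 0\<close> \<open>d \<ge> 0\<close> by (auto simp: power2_eq_iff)
  have yb: "norm (y - b) = t - r + s" using on_bisector by (simp add: t_def)
  have yb_sq: "(t - r + s)^2 = t^2 - 2 * p + d^2"
    using power2_norm_diff_recenter[of y b a] by (simp add: yb t_def p_def d_def)
  have "d \<le> t + norm (y - b)"
    using norm_triangle_ineq4[of "y - a" "y - b"] by (simp add: d_def t_def norm_minus_commute)
  with yb inside have "s = d - r \<Longrightarrow> t = r" by (simp add: t_def)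
  with s_cases yb_sq s_sq have "p = t * d \<or> p = - (t * d)"
    by (auto simp: power2_eq_square algebra_simps)
  then have "p^2 = (t * d)^2" by auto
  then show ?thesis
    using inner_square_plus_cross2_square[of "y - a" "b - a"]
    by (simp add: p_def t_def d_def power_mult_distrib)
qed

lemma continuous_on_delta [continuous_intros]: "continuous_on S (delta D)"
  unfolding delta_def by (intro continuous_intros)

lemma inj_on_delta_bisector_inside_disk:
  assumes "fst A \<noteq> fst B" "delta A x = 0" "delta B x = 0"
  shows "\<exists>e>0. inj_on (delta A) ({y. delta A y = delta B y \<and> delta A y \<le> 0} \<inter> ball x e)"
proof -
  obtain a r b s where A: "A = (a, r)" and B: "B = (b, s)" by fastforce
  define H where "H = {y. delta A y = delta B y \<and> delta A y \<le> 0}"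
  define \<sigma> where "\<sigma> y = cross2 (b - a) (y - a)" for y
  have on_H: "norm (y - a) - r = norm (y - b) - s" "norm (y - a) \<le> r" if "y \<in> H" for y
    using that by (auto simp: H_def A B delta_def)
  have x: "norm (x - a) = r" "norm (x - b) = s" using assms(2,3) by (auto simp: A B delta_def)
  obtain e where "e > 0" and same_side: "\<And>y1 y2. y1 \<in> H \<inter> ball x e \<Longrightarrow> y2 \<in> H \<inter> ball x e \<Longrightarrow> 0 \<le> \<sigma> y1 * \<sigma> y2"
  proof (cases "\<sigma> x = 0")
    case True
    then have "\<sigma> y = 0" if "y \<in> H" for y
      using cross2_eq_0_on_bisector_inside_disk x on_H[OF that] by (simp add: \<sigma>_def)
    then show ?thesis using that[of 1] by simp
  next
    case False
    have "open {y. 0 < \<sigma> y * \<sigma> x}"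
      unfolding \<sigma>_def cross2_def by (intro open_Collect_less continuous_intros)
    moreover have x_pos: "0 < \<sigma> x * \<sigma> x"
      using False by (auto simp: zero_less_mult_iff linorder_neq_iff)
    ultimately obtain e where "e > 0" and near: "ball x e \<subseteq> {y. 0 < \<sigma> y * \<sigma> x}"
      by (auto elim!: openE)
    have "0 \<le> \<sigma> y1 * \<sigma> y2" if "y1 \<in> ball x e" "y2 \<in> ball x e" for y1 y2
    proof -
      have "0 < (\<sigma> y1 * \<sigma> x) * (\<sigma> y2 * \<sigma> x)" using near that by (blast intro: mult_pos_pos)
      also have "\<dots> = (\<sigma> y1 * \<sigma> y2) * (\<sigma> x * \<sigma> x)" by (simp add: ac_simps)
      finally show ?thesis using x_pos by (metis zero_less_mult_pos2 less_imp_le)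
    qed
    then show ?thesis using that[OF \<open>e > 0\<close>] by simp
  qed
  have "a \<noteq> b" using assms by (auto simp: A B)
  have "inj_on (delta A) (H \<inter> ball x e)"
  proof (rule inj_onI)
    fix y1 y2 assume y: "y1 \<in> H \<inter> ball x e" "y2 \<in> H \<inter> ball x e" and "delta A y1 = delta A y2"
    then have "norm (y1 - a) = norm (y2 - a)" by (simp add: A delta_def)
    moreover have "norm (y1 - b) = norm (y2 - b)"
      using calculation on_H(1)[of y1] on_H(1)[of y2] y by simp
    ultimately show "y1 = y2"
      using eq_if_equidistant_same_side \<open>a \<noteq> b\<close> same_side[OF y] by (simp add: \<sigma>_def)
  qed
  then show ?thesis using \<open>e > 0\<close> H_def by blast
qed

lemma eventually_active_sites_subset:
  assumes "finite S"
  shows "\<forall>\<^sub>F y in nhds x. {D \<in> S. y \<in> apollonius_cell S D} \<subseteq> {D \<in> S. x \<in> apollonius_cell S D}"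
proof -
  have "\<forall>\<^sub>F y in nhds x. x \<notin> apollonius_cell S D \<longrightarrow> y \<notin> apollonius_cell S D" if "D \<in> S" for D
  proof (cases "x \<in> apollonius_cell S D")
    case False
    then obtain D' where "D' \<in> S" "delta D' x < delta D x"
      by (auto simp: apollonius_cell_def not_le)
    moreover have "open {y. delta D' y < delta D y}"
      by (intro open_Collect_less continuous_intros)
    ultimately have "\<forall>\<^sub>F y in nhds x. delta D' y < delta D y"
      using eventually_nhds_in_open[of "{y. delta D' y < delta D y}" x] by simp
    then show ?thesis
      by eventually_elim (use \<open>D' \<in> S\<close> in \<open>auto simp: apollonius_cell_def not_le\<close>)
  qed simp
  then have "\<forall>\<^sub>F y in nhds x. \<forall>D\<in>S. x \<notin> apollonius_cell S D \<longrightarrow> y \<notin> apollonius_cell S D"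
    using assms by (intro eventually_ball_finite) auto
  then show ?thesis by eventually_elim blast
qed

lemma two_cell_point_eventually_on_bisector:
  assumes "finite S" "x \<in> two_cell_points S" "A \<in> S" "x \<in> apollonius_cell S A"
  obtains B where "B \<in> S" "fst B \<noteq> fst A" "delta B x = delta A x"
    "\<forall>\<^sub>F y in nhds x. y \<in> two_cell_points S \<longrightarrow> y \<in> apollonius_cell S A \<longrightarrow> delta A y = delta B y"
proof -
  let ?active = "\<lambda>y. {D \<in> S. y \<in> apollonius_cell S D}"
  obtain u v where uv: "?active x = {u, v}" "u \<noteq> v"
    using assms(2) by (auto simp: two_cell_points_def card_2_iff)
  obtain B where B: "?active x = {A, B}" "B \<noteq> A"
  proof (cases "A = u")
    case True
    then show ?thesis using that uv by simp
  next
    case False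
    then have "A = v" using uv assms(3,4) by blast
    then show ?thesis using that[of u] uv by (simp add: insert_commute)
  qed
  have on_bisector: "delta A y = delta B y" if "?active y \<subseteq> ?active x" "y \<in> two_cell_points S"
    "y \<in> apollonius_cell S A" for y
  proof -
    have "?active y = {A, B}"
      using that(1,2) B by (intro card_subset_eq) (auto simp: two_cell_points_def)
    then have "y \<in> apollonius_cell S B" by blast
    moreover have "B \<in> S" using B(1) by blast
    ultimately have "delta B y \<le> delta A y" "delta A y \<le> delta B y"
      using that(3) assms(3) by (auto simp: apollonius_cell_def)
    then show ?thesis by simp
  qed
  have "B \<in> S" using B(1) by blast
  moreover have "delta B x = delta A x" using on_bisector[of x] assms(2,4) by simp
  moreover have "fst B \<noteq> fst A"
  proof
    assume "fst B = fst A"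
    with \<open>delta B x = delta A x\<close> have "snd B = snd A" by (simp add: delta_def)
    with \<open>fst B = fst A\<close> B(2) show False by (simp add: prod_eq_iff)
  qed
  moreover have "\<forall>\<^sub>F y in nhds x. y \<in> two_cell_points S \<longrightarrow> y \<in> apollonius_cell S A \<longrightarrow> delta A y = delta B y"
    using on_bisector eventually_active_sites_subset[OF assms(1), of x] by (auto elim: eventually_mono)
  ultimately show ?thesis using that by blast
qed

lemma arc_no_interior_local_max:
  fixes g :: "real \<Rightarrow> 'a::topological_space" and f :: "'a \<Rightarrow> real"
  assumes "arc g" "0 < t0" "t0 < 1" "continuous_on (path_image g) f"
    and "open U" "g t0 \<in> U" "inj_on f (path_image g \<inter> U)"
    and local_max: "\<forall>y \<in> path_image g \<inter> U. f y \<le> f (g t0)"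
  shows False
proof -
  have g: "continuous_on {0..1} g" "inj_on g {0..1}"
    using \<open>arc g\<close> by (auto simp: arc_def path_def)
  then have "open ({0<..<1} \<inter> g -` U)"
    using \<open>open U\<close> by (intro continuous_open_preimage) (auto elim: continuous_on_subset)
  moreover have "t0 \<in> {0<..<1} \<inter> g -` U" using assms(2,3,6) by simp
  ultimately obtain \<delta> where "\<delta> > 0" and \<delta>: "cball t0 \<delta> \<subseteq> {0<..<1} \<inter> g -` U"
    by (meson open_contains_cball)
  define I where "I = {t0 - \<delta>..t0 + \<delta>}"
  have "I \<subseteq> {0<..<1}" "I \<subseteq> g -` U"
    using \<delta> by (auto simp: I_def cball_eq_atLeastAtMost)
  then have I: "I \<subseteq> {0..1}" "g ` I \<subseteq> path_image g \<inter> U"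
    by (auto simp: path_image_def)
  have "continuous_on I g" using g(1) I(1) by (rule continuous_on_subset)
  moreover have "continuous_on (g ` I) f" using assms(4) by (rule continuous_on_subset) (use I(2) in blast)
  ultimately have "continuous_on I (f \<circ> g)" by (rule continuous_on_compose)
  moreover have "inj_on (f \<circ> g) I"
  proof (rule comp_inj_on)
    show "inj_on g I" using g(2) I(1) by (rule inj_on_subset)
    show "inj_on f (g ` I)" using assms(7) I(2) by (rule inj_on_subset)
  qed
  ultimately have "f (g t0) < f (g (t0 - \<delta>)) \<or> f (g t0) < f (g (t0 + \<delta>))"
    using continuous_inj_imp_mono[of "t0 - \<delta>" t0 "t0 + \<delta>" "f \<circ> g"] \<open>\<delta> > 0\<close>
    by (auto simp: I_def)
  moreover have "g (t0 - \<delta>) \<in> path_image g \<inter> U" "g (t0 + \<delta>) \<in> path_image g \<inter> U"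
    using I(2) \<open>\<delta> > 0\<close> by (auto simp: I_def)
  ultimately show False using local_max by force
qed

lemma arc_in_two_cells_leaves_disk:
  assumes "finite S" "A \<in> S" "arc g" "0 < t0" "t0 < 1" "delta A (g t0) = 0"
    and edge: "path_image g - {pathstart g, pathfinish g} \<subseteq> two_cell_points S \<inter> apollonius_cell S A"
    and "\<epsilon> > 0"
  shows "\<exists>y \<in> path_image g - {pathstart g, pathfinish g}. dist y (g t0) < \<epsilon> \<and> 0 < delta A y"
proof (rule ccontr)
  define x where "x = g t0"
  define E where "E = path_image g - {pathstart g, pathfinish g}"
  assume "\<not> ?thesis"
  then have inside: "delta A y \<le> 0" if "y \<in> E" "dist y x < \<epsilon>" for y
    using that by (auto simp: E_def x_def)
  have "x \<noteq> pathstart g" "x \<noteq> pathfinish g"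
    using \<open>arc g\<close> assms(4,5) by (auto simp: x_def arc_def pathstart_def pathfinish_def dest: inj_onD)
  then have "x \<in> E" using assms(4,5) by (auto simp: E_def x_def path_image_def)
  then have "x \<in> two_cell_points S" "x \<in> apollonius_cell S A" using edge by (auto simp: E_def)
  then obtain B where "fst B \<noteq> fst A" "delta B x = delta A x"
    and "\<forall>\<^sub>F y in nhds x. y \<in> two_cell_points S \<longrightarrow> y \<in> apollonius_cell S A \<longrightarrow> delta A y = delta B y"
    using two_cell_point_eventually_on_bisector[OF assms(1) _ assms(2)] by blast
  then obtain e' where "e' > 0"
    and bisector: "\<And>y. y \<in> E \<Longrightarrow> dist y x < e' \<Longrightarrow> delta A y = delta B y"
    using edge unfolding eventually_nhds_metric E_def by blast
  have "delta A x = 0" "delta B x = 0" using assms(6) \<open>delta B x = delta A x\<close> by (simp_all add: x_def)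
  then obtain e where "e > 0"
    and inj: "inj_on (delta A) ({y. delta A y = delta B y \<and> delta A y \<le> 0} \<inter> ball x e)"
    using inj_on_delta_bisector_inside_disk[of A B x] \<open>fst B \<noteq> fst A\<close> by auto
  define U where "U = ball x (min \<epsilon> (min e e')) - {pathstart g, pathfinish g}"
  have "path_image g \<inter> U \<subseteq> {y. delta A y = delta B y \<and> delta A y \<le> 0} \<inter> ball x e"
  proof
    fix y assume "y \<in> path_image g \<inter> U"
    then have "y \<in> E" "dist y x < \<epsilon>" "dist y x < e'" "dist x y < e"
      by (auto simp: U_def E_def dist_commute)
    then show "y \<in> {y. delta A y = delta B y \<and> delta A y \<le> 0} \<inter> ball x e"
      using inside[of y] bisector[of y] by simp
  qed
  show False
  proof (rule arc_no_interior_local_max[OF \<open>arc g\<close> assms(4,5)])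
    show "continuous_on (path_image g) (delta A)" by (rule continuous_on_delta)
    show "open U" by (simp add: U_def open_Diff)
    show "g t0 \<in> U"
      using \<open>x \<in> E\<close> \<open>\<epsilon> > 0\<close> \<open>e > 0\<close> \<open>e' > 0\<close> by (simp add: U_def E_def x_def)
    show "inj_on (delta A) (path_image g \<inter> U)"
      using inj by (rule inj_on_subset) fact
    show "\<forall>y \<in> path_image g \<inter> U. delta A y \<le> delta A (g t0)"
      using \<open>path_image g \<inter> U \<subseteq> _\<close> assms(6) by auto
  qed
qed

lemma notin_diff_disks_union_if_delta_pos:
  assumes "y \<in> apollonius_cell (diff_disks n c \<rho>) A" "0 < delta A y"
  shows "y \<notin> diff_disks_union n c \<rho>"
proof
  assume "y \<in> diff_disks_union n c \<rho>"
  then obtain k l where "k \<in> {1..n}" "l \<in> {1..n}" and y: "y \<in> cball (c k - c l) (\<rho> k + \<rho> l)"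
    by (auto simp: diff_disks_union_def)
  then have "(c k - c l, \<rho> k + \<rho> l) \<in> diff_disks n c \<rho>"
    by (force simp: diff_disks_def)
  with assms have "0 < delta (c k - c l, \<rho> k + \<rho> l) y"
    by (force simp: apollonius_cell_def)
  with y show False by (simp add: delta_def dist_norm norm_minus_commute)
qed

theorem proposition13:
  fixes n i j :: nat and c :: "nat \<Rightarrow> real^2" and \<rho> :: "nat \<Rightarrow> real"
    and E :: "(real^2) set" and g :: "real \<Rightarrow> real^2" and p q x :: "real^2"
  assumes "\<forall>k\<in>{1..n}. \<rho> k \<ge> 0"
    and "i \<in> {1..n}" and "j \<in> {1..n}"
    and "apollonius_edge (diff_disks n c \<rho>) E"
    and "E \<subseteq> apollonius_cell (diff_disks n c \<rho>) (c i - c j, \<rho> i + \<rho> j)"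
    and "arc g" and "pathstart g = p" and "pathfinish g = q"
    and "E = path_image g - {p, q}"
    and "x \<in> path_image g" and "x \<noteq> p" and "x \<noteq> q"
    and "x \<in> sphere (c i - c j) (\<rho> i + \<rho> j)"
  shows "\<forall>\<epsilon>>0. \<exists>x'\<in>E. dist x' x < \<epsilon> \<and> x' \<notin> diff_disks_union n c \<rho>"
proof (intro allI impI)
  fix \<epsilon> :: real
  assume "\<epsilon> > 0"
  define A where "A = (c i - c j, \<rho> i + \<rho> j)"
  obtain t0 where "0 < t0" "t0 < 1" "g t0 = x"
    using assms(7,8,10-12) by (fastforce simp: path_image_def pathstart_def pathfinish_def le_less)
  moreover have "A \<in> diff_disks n c \<rho>" using assms(2,3) by (force simp: A_def diff_disks_def)
  moreover have "finite (diff_disks n c \<rho>)" by (simp add: diff_disks_def)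
  moreover have "delta A x = 0"
    using assms(13) by (simp add: A_def delta_def dist_norm norm_minus_commute)
  moreover have "E \<subseteq> two_cell_points (diff_disks n c \<rho>) \<inter> apollonius_cell (diff_disks n c \<rho>) A"
    using assms(4,5) in_components_subset by (fastforce simp: apollonius_edge_def A_def)
  ultimately obtain y where "y \<in> E" "dist y x < \<epsilon>" "0 < delta A y"
    using arc_in_two_cells_leaves_disk[of _ A g t0 \<epsilon>] assms(6-9) \<open>\<epsilon> > 0\<close> by blast
  then show "\<exists>x'\<in>E. dist x' x < \<epsilon> \<and> x' \<notin> diff_disks_union n c \<rho>"
    using notin_diff_disks_union_if_delta_pos assms(5) unfolding A_def by blast
qed

end
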